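(* Let $n$ and $h$ be positive integers and let $m$ and $s$ be nonnegative integers with $h\le n-m$ and $s\le m$. Then, as an identity of rational functions in $q$ and $x$, $$\sum_{j=s}^{m}\sum_{k=s}^{n}\frac{(q^{-n};q)_j(q^{-n};q)_k(x;q)_j(x;q)_k(q^{j-m-h+1};q)_{h-1}(q^{k-m-h+1};q)_{h-1}(1-q^{k-j})\,q^{2j+k}}{(q;q)_{j-s}(q;q)_{j+s}(q;q)_{k-s}(q;q)_{k+s}}$$ $$=\frac{(q;q)_n^2\,(q;q)_{h-1}\,(x;q)_s\,(x;q)_{m+h}\,(q^{s+1}/x;q)_{n-s-h}\,x^{n-s-h}\,q^{\frac{m^2+3m-s^2+s}{2}-mn-mh-h^2+h}}{(-1)^{m-s-1}(q;q)_{m-s}(q;q)_{m+s}(q;q)_{n-s}(q;q)_{n+s}(q;q)_{n-m-h}}.$$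
   Context: For an indeterminate $q$ and an integer $n\ge 0$: $(a;q)_0=1$ and $(a;q)_n=(1-a)(1-aq)\cdots(1-aq^{n-1})$. *)

theory Defs
  imports Complex_Main
begin

definition qpoch :: "'a::field \<Rightarrow> 'a \<Rightarrow> nat \<Rightarrow> 'a" where
  "qpoch a q n = (\<Prod>i<n. (1 - a * q ^ i))"

end

theory Submission
  imports Defs "HOL-Computational_Algebra.Polynomial"
begin

(*
  Write (x;q)_j = (x;q)_s * P_(j-s)(x), where P_l(x) = (1 - x q^s) ... (1 - x q^(s+l-1)).  Then
  the left-hand side equals (x;q)_s^2 * L(x) for a polynomial L of degree at most
  D = (m-s) + (n-s), whose coefficient of x^D comes from the single summand j = m, k = n.
  L has the D distinct roots
    x = q^-i  (s <= i < m+h):  both sums collapse to a common range, on which the summand is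
                               antisymmetric in (j,k);
    x = q^e   (s < e <= n-h):  the summand factors into one-variable sums, which are moments of
                               the q-binomial coefficients (q^-N;q)_t/(q;q)_t against a polynomial of
                               low degree in q^t, and these vanish by the terminating q-binomial
                               theorem.
  Hence L is its leading coefficient times the product of (x - root).  Regrouping these linear
  factors as (x;q)_(m+h) and (q^(s+1)/x;q)_(n-s-h) and evaluating the leading coefficient with the
  reversal formula for (q^-N;q)_M gives the right-hand side.
*)

lemma qpoch_0 [simp]: "qpoch a q 0 = 1"
  by (simp add: qpoch_def)

lemma qpoch_Suc: "qpoch a q (Suc n) = qpoch a q n * (1 - a * q ^ n)"
  by (simp add: qpoch_def)

lemma qpoch_add: "qpoch a q (n + l) = qpoch a q n * qpoch (a * q ^ n) q l"
  by (induction l) (simp_all add: qpoch_Suc power_add mult_ac)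

lemma qpoch_Suc_left: "qpoch a q (Suc n) = (1 - a) * qpoch (a * q) q n"
  using qpoch_add[of a q 1 n] by (simp add: qpoch_def)

lemma qpoch_eq_0I: "i < n \<Longrightarrow> a * q ^ i = 1 \<Longrightarrow> qpoch a q n = 0"
  unfolding qpoch_def by (rule prod_zero) auto

lemma qpoch_nonzero: "(\<And>i. i < n \<Longrightarrow> a * q ^ i \<noteq> 1) \<Longrightarrow> qpoch a q n \<noteq> 0"
  unfolding qpoch_def by (subst prod_zero_iff) auto

lemma prod_neg_powers:
  fixes q :: "'a::comm_ring_1"
  shows "finite A \<Longrightarrow> (\<Prod>i\<in>A. - (q ^ f i)) = (-1) ^ card A * q ^ (\<Sum>i\<in>A. f i)"
  by (simp add: prod.distrib[of "\<lambda>_. -1" "\<lambda>i. q ^ f i", simplified] power_sum)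

lemma sum_shifted_range: "2 * int (\<Sum>i<L. c + i) = 2 * int L * int c + int L * (int L - 1)"
  by (induction L) (simp_all add: algebra_simps)

lemma sum_reversed_range: "L \<le> N \<Longrightarrow> 2 * int (\<Sum>i<L. N - i) = 2 * int L * int N - int L * (int L - 1)"
  by (induction L) (simp_all add: algebra_simps of_nat_diff)

lemma prod_list_upt: "(\<Prod>i\<leftarrow>[a..<b]. f i) = (\<Prod>i\<in>{a..<b}. f i)"
  using prod.distinct_set_conv_list[of "[a..<b]" f] by simp

lemma double_sum_antisym_0:
  fixes f :: "'i \<Rightarrow> 'i \<Rightarrow> 'a::{idom, ring_char_0}"
  assumes "\<And>j k. f j k = - f k j"
  shows "(\<Sum>j\<in>A. \<Sum>k\<in>A. f j k) = 0"
proof -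
  have "(\<Sum>j\<in>A. \<Sum>k\<in>A. f j k) = (\<Sum>k\<in>A. \<Sum>j\<in>A. - f k j)"
    by (subst sum.swap) (intro sum.cong refl assms)
  also have "\<dots> = - (\<Sum>j\<in>A. \<Sum>k\<in>A. f j k)" by (simp add: sum_negf)
  finally show ?thesis by simp
qed

text \<open>The polynomial \<open>(1 - c 0 x) \<dots> (1 - c (l-1) x)\<close>; truncated q-Pochhammer symbols,
  regarded as polynomials in \<open>x\<close>, are of this form.\<close>
definition linprod :: "(nat \<Rightarrow> 'a::comm_ring_1) \<Rightarrow> nat \<Rightarrow> 'a poly" where
  "linprod c l = (\<Prod>i<l. [:1, - c i:])"

lemma poly_linprod: "poly (linprod c l) x = (\<Prod>i<l. 1 - c i * x)"
  unfolding linprod_def poly_prod by (intro prod.cong refl) (simp add: algebra_simps)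

lemma degree_linprod_le: "degree (linprod c l) \<le> l"
proof (induction l)
  case (Suc l)
  have "degree (linprod c l * [:1, - c l:]) \<le> degree (linprod c l) + degree [:1, - c l:]"
    by (rule degree_mult_le)
  also have "\<dots> \<le> Suc l" using Suc by simp
  finally show ?case by (simp add: linprod_def)
qed (simp add: linprod_def)

lemma linprod_lead:
  fixes c :: "nat \<Rightarrow> 'a::idom"
  assumes "\<And>i. c i \<noteq> 0"
  shows "degree (linprod c l) = l \<and> coeff (linprod c l) l = (\<Prod>i<l. - c i)"
proof (induction l)
  case 0 then show ?case by (simp add: linprod_def)
next
  case (Suc l)
  have split: "linprod c (Suc l) = linprod c l * [:1, - c l:]" by (simp add: linprod_def)
  have "coeff (linprod c l) l \<noteq> 0" using Suc assms by simp
  then have "linprod c l \<noteq> 0" by auto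
  then have deg: "degree (linprod c (Suc l)) = Suc l"
    using Suc assms unfolding split by (subst degree_mult_eq) auto
  have "coeff (linprod c (Suc l)) (Suc l) = coeff (linprod c l) l * (- c l)"
    using lead_coeff_mult[of "linprod c l" "[:1, - c l:]"] deg Suc assms by (simp add: split)
  then show ?case using deg Suc by simp
qed

lemma poly_eq_smult_roots:
  fixes p :: "'a::idom poly"
  assumes "degree p \<le> length rs" "distinct rs" "\<And>r. r \<in> set rs \<Longrightarrow> poly p r = 0"
  shows "p = smult (coeff p (length rs)) (\<Prod>r\<leftarrow>rs. [:- r, 1:])"
  using assms
proof (induction rs arbitrary: p)
  case Nil
  then show ?case using degree_0_id[of p] by simp
next
  case (Cons r rs)
  have "[:- r, 1:] dvd p" using Cons.prems(3) poly_eq_0_iff_dvd by auto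
  then obtain p' where p: "p = [:- r, 1:] * p'" by (erule dvdE)
  have deg: "degree p' \<le> length rs"
  proof (cases "p' = 0")
    case False
    then have "degree p = Suc (degree p')" unfolding p by (subst degree_mult_eq) auto
    then show ?thesis using Cons.prems(1) by simp
  qed simp
  have "poly p' r' = 0" if "r' \<in> set rs" for r'
    using Cons.prems(2) Cons.prems(3)[of r'] that by (auto simp: p)
  then have p': "p' = smult (coeff p' (length rs)) (\<Prod>r\<leftarrow>rs. [:- r, 1:])"
    using Cons.IH deg Cons.prems(2) by simp
  have "coeff p (length (r # rs)) = coeff p' (length rs)"
    using deg by (simp add: p mult_pCons_left coeff_eq_0)
  then show ?case by (subst p, subst p') simp
qed

lemma poly_prod_linear:
  fixes x :: "'a::comm_ring_1"
  shows "poly (\<Prod>r\<leftarrow>rs. [:- r, 1:]) x = (\<Prod>r\<leftarrow>rs. x - r)"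
  using poly_prod_list[of "map (\<lambda>r. [:- r, 1:]) rs" x] by (simp add: o_def)

text \<open>A base \<open>q\<close> that is nonzero and not a root of unity: distinct integer powers of \<open>q\<close>
  are distinct, and all \<open>(q;q)_n\<close> are invertible.\<close>
locale generic_q =
  fixes q :: "'a::field"
  assumes q_nonzero: "q \<noteq> 0" and q_not_root: "\<And>i::nat. i > 0 \<Longrightarrow> q ^ i \<noteq> 1"
begin

lemma power_int_add_q: "q powi (a + b) = q powi a * q powi b"
  using q_nonzero by (simp add: power_int_add)

lemma power_int_eq_1_iff: "q powi a = 1 \<longleftrightarrow> a = 0"
proof
  assume a: "q powi a = 1"
  have pos: "q powi b \<noteq> 1" if "b > 0" for b
    using that q_not_root[of "nat b"] by (simp add: power_int_def)
  show "a = 0"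
  proof (rule ccontr)
    assume "a \<noteq> 0"
    then consider "a > 0" | "- a > 0" by linarith
    then show False using pos[of a] pos[of "- a"] a by cases (auto simp: power_int_minus)
  qed
qed simp

lemma power_int_inj: "q powi a = q powi b \<longleftrightarrow> a = b"
  using power_int_eq_1_iff[of "a - b"] q_nonzero by (auto simp: power_int_diff)

lemma qpoch_q_nonzero: "qpoch q q n \<noteq> 0"
proof (rule qpoch_nonzero)
  show "q * q ^ i \<noteq> 1" for i using q_not_root[of "Suc i"] by simp
qed

text \<open>\<open>(q^-i;q)_j\<close> contains the factor \<open>1 - q^-i q^i = 0\<close> as soon as \<open>i < j\<close>.\<close>
lemma qpoch_neg_power_vanish: "i < j \<Longrightarrow> qpoch (q powi (- int i)) q j = 0"
  by (rule qpoch_eq_0I) (use q_nonzero in \<open>simp_all add: power_int_minus_divide\<close>)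

lemma qpoch_neg_power_split:
  assumes "s \<le> n"
  shows "qpoch (q powi (- int n)) q (t + s) = qpoch (q powi (- int n)) q s * qpoch (q powi (- int (n - s))) q t"
proof -
  have "q powi (- int n) * q powi int s = q powi (- int n + int s)"
    by (simp only: power_int_add_q)
  also have "- int n + int s = - int (n - s)" using assms by simp
  finally have "q powi (- int n) * q ^ s = q powi (- int (n - s))" by simp
  then show ?thesis using qpoch_add[of "q powi (- int n)" q s t] by (simp add: add.commute)
qed

lemma qpoch_reverse:
  assumes "M \<le> N"
  shows "qpoch (q powi (- int N)) q M * qpoch q q (N - M) * q ^ (\<Sum>i<M. N - i) = (-1) ^ M * qpoch q q N"
proof -
  have factor: "(1 - q powi (- int N) * q ^ i) * q ^ (N - i) = - (1 - q ^ (N - i))" if "i < M" for i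
  proof -
    have "q powi (- int N) * q powi int i * q powi int (N - i) = q powi (- int N + int i + int (N - i))"
      by (simp only: power_int_add_q)
    also have "- int N + int i + int (N - i) = 0" using that assms by (simp add: of_nat_diff)
    finally have "q powi (- int N) * q ^ i * q ^ (N - i) = 1" by (simp only: power_int_of_nat power_int_0_right)
    then show ?thesis by (simp add: algebra_simps)
  qed
  have reindex: "(\<Prod>i<M. 1 - q ^ (N - i)) = qpoch (q * q ^ (N - M)) q M"
  proof -
    have "(\<Prod>i<M. 1 - q ^ (N - i)) = (\<Prod>i<M. 1 - q ^ (N - M + 1 + (M - Suc i)))"
      using assms by (intro prod.cong refl) (simp add: Suc_diff_Suc)
    also have "\<dots> = (\<Prod>i<M. 1 - q ^ (N - M + 1 + i))"
      by (rule prod.nat_diff_reindex)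
    finally show ?thesis by (simp add: qpoch_def power_add mult_ac)
  qed
  have "qpoch (q powi (- int N)) q M * q ^ (\<Sum>i<M. N - i)
      = (\<Prod>i<M. (1 - q powi (- int N) * q ^ i) * q ^ (N - i))"
    by (simp add: qpoch_def power_sum prod.distrib)
  also have "\<dots> = (\<Prod>i<M. (-1) * (1 - q ^ (N - i)))"
    by (intro prod.cong refl) (simp add: factor)
  also have "\<dots> = (-1) ^ M * qpoch (q * q ^ (N - M)) q M"
    by (simp only: prod.distrib prod_constant card_lessThan reindex)
  finally show ?thesis
    using qpoch_add[of q q "N - M" M] assms by (simp add: mult_ac)
qed

definition qbin_coeff :: "nat \<Rightarrow> nat \<Rightarrow> 'a" where
  "qbin_coeff N t = qpoch (q powi (- int N)) q t / qpoch q q t"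

definition qbin_sum :: "nat \<Rightarrow> 'a \<Rightarrow> 'a" where
  "qbin_sum N z = (\<Sum>t\<le>N. qbin_coeff N t * z ^ t)"

lemma qbin_coeff_0 [simp]: "qbin_coeff N 0 = 1"
  by (simp add: qbin_coeff_def)

lemma qbin_coeff_beyond: "qbin_coeff N (Suc N) = 0"
proof -
  have "qpoch (q powi (- int N)) q (Suc N) = 0"
    by (rule qpoch_eq_0I[of N]) (use q_nonzero in \<open>simp_all add: power_int_minus\<close>)
  then show ?thesis by (simp add: qbin_coeff_def)
qed

lemma qbin_coeff_Suc: "qbin_coeff (Suc N) (Suc t) = (qbin_coeff N (Suc t) - qbin_coeff N t) / q ^ Suc t"
proof -
  define A where "A = qpoch (q powi (- int N)) q t"
  define B where "B = qpoch q q t"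
  have B: "B \<noteq> 0" using qpoch_q_nonzero by (simp add: B_def)
  have Suc_t: "1 - q * q ^ t \<noteq> 0" using q_not_root[of "Suc t"] by simp
  have shift: "q powi (- int (Suc N)) * q = q powi (- int N)"
    using power_int_add_1[of q "- int (Suc N)"] q_nonzero by simp
  have num_Suc: "qpoch (q powi (- int (Suc N))) q (Suc t) = (1 - q powi (- int (Suc N))) * A"
    unfolding A_def qpoch_Suc_left shift ..
  have num: "qpoch (q powi (- int N)) q (Suc t) = A * (1 - q powi (- int N) * q ^ t)"
    unfolding A_def qpoch_Suc ..
  have den: "qpoch q q (Suc t) = B * (1 - q * q ^ t)"
    unfolding B_def qpoch_Suc by simp
  have pow_Suc: "q powi (- int (Suc N)) = 1 / (q ^ N * q)"
    by (metis power_int_minus_divide power_int_of_nat power_Suc2)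
  have pow: "q powi (- int N) = 1 / q ^ N"
    by (simp add: power_int_minus_divide)
  have field_identity: "(1 - 1 / (Q * q)) * A / (B * (1 - q * u))
      = (A * (1 - 1 / Q * u) / (B * (1 - q * u)) - A / B) / (q * u)"
    if "Q \<noteq> 0" "u \<noteq> 0" "1 - q * u \<noteq> 0" for Q u
    using that B q_nonzero by (simp add: field_simps)
  show ?thesis
    unfolding qbin_coeff_def num_Suc num den A_def[symmetric] B_def[symmetric]
    unfolding pow_Suc pow power_Suc
    using Suc_t q_nonzero by (intro field_identity) simp_all
qed

lemma qbin_sum_Suc: "qbin_sum (Suc N) z = (1 - z / q) * qbin_sum N (z / q)"
proof -
  have "qbin_sum (Suc N) z = 1 + (\<Sum>t\<le>N. qbin_coeff (Suc N) (Suc t) * z ^ Suc t)"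
    unfolding qbin_sum_def by (subst sum.atMost_Suc_shift) simp
  also have "(\<Sum>t\<le>N. qbin_coeff (Suc N) (Suc t) * z ^ Suc t)
      = (\<Sum>t\<le>N. qbin_coeff N (Suc t) * (z / q) ^ Suc t) - (\<Sum>t\<le>N. qbin_coeff N t * (z / q) ^ Suc t)"
    unfolding sum_subtractf[symmetric]
    by (rule sum.cong) (use q_nonzero in \<open>simp_all add: qbin_coeff_Suc field_simps power_divide\<close>)
  also have "(\<Sum>t\<le>N. qbin_coeff N (Suc t) * (z / q) ^ Suc t)
      = (\<Sum>t\<le>Suc N. qbin_coeff N t * (z / q) ^ t) - 1"
    unfolding sum.atMost_Suc_shift[where n = N] by simp
  also have "(\<Sum>t\<le>Suc N. qbin_coeff N t * (z / q) ^ t) = qbin_sum N (z / q)"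
    by (simp add: qbin_sum_def qbin_coeff_beyond)
  also have "(\<Sum>t\<le>N. qbin_coeff N t * (z / q) ^ Suc t) = z / q * qbin_sum N (z / q)"
    by (simp add: qbin_sum_def sum_distrib_left mult_ac)
  finally show ?thesis by (simp add: algebra_simps)
qed

lemma qbin_sum_prod: "qbin_sum N z = (\<Prod>i<N. 1 - z / q ^ Suc i)"
proof (induction N arbitrary: z)
  case 0 then show ?case by (simp add: qbin_sum_def)
next
  case (Suc N)
  show ?case
    unfolding qbin_sum_Suc Suc prod.lessThan_Suc_shift[where n = N]
    by (simp add: field_simps)
qed

lemma qbin_sum_root: "1 \<le> a \<Longrightarrow> a \<le> N \<Longrightarrow> qbin_sum N (q ^ a) = 0"
  unfolding qbin_sum_prod using q_nonzero
  by (intro prod_zero bexI[of _ "a - 1"]) auto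

text \<open>Hence the q-binomial coefficients are orthogonal to every \<open>(q^t)^a p(q^t)\<close> with
  \<open>1 \<le> a\<close> and \<open>a + degree p \<le> N\<close>: expand \<open>p\<close> into monomials and use the roots
  \<open>q^1, \<dots>, q^N\<close> of the generating polynomial.\<close>
lemma qbin_moment_vanish:
  assumes "1 \<le> a" "a + degree p \<le> N"
  shows "(\<Sum>t\<le>N. qbin_coeff N t * (q ^ t) ^ a * poly p (q ^ t)) = 0"
proof -
  have monomial: "(q ^ t) ^ a * (q ^ t) ^ i = (q ^ (a + i)) ^ t" for t i
    by (simp add: power_mult[symmetric] power_add[symmetric] algebra_simps)
  have "(\<Sum>t\<le>N. qbin_coeff N t * (q ^ t) ^ a * poly p (q ^ t))
      = (\<Sum>t\<le>N. \<Sum>i\<le>degree p. coeff p i * (qbin_coeff N t * (q ^ (a + i)) ^ t))"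
    by (simp add: poly_altdef sum_distrib_left monomial[symmetric] mult_ac)
  also have "\<dots> = (\<Sum>i\<le>degree p. coeff p i * qbin_sum N (q ^ (a + i)))"
    by (subst sum.swap) (simp add: qbin_sum_def sum_distrib_left)
  also have "\<dots> = 0" using assms by (intro sum.neutral ballI) (simp add: qbin_sum_root)
  finally show ?thesis .
qed

end

locale sum_setting = generic_q q for q :: "'a::field_char_0" +
  fixes n h m s :: nat
  assumes h_pos: "h > 0" and h_le: "h \<le> n - m" and s_le_m: "s \<le> m"
begin

lemma m_less_n: "m < n"
  using h_pos h_le by simp

lemma s_plus_h_le_n: "s + h \<le> n"
  using h_le m_less_n s_le_m by linarith

definition weight :: "nat \<Rightarrow> 'a" where
  "weight j = qpoch (q powi (- int n)) q j * qpoch (q powi (int j - int m - int h + 1)) q (h - 1)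
     / (qpoch q q (j - s) * qpoch q q (j + s))"

definition kernel :: "nat \<Rightarrow> nat \<Rightarrow> 'a" where
  "kernel j k = weight j * weight k * (q ^ (2 * j + k) - q ^ (j + 2 * k))"

definition lhs :: "'a \<Rightarrow> 'a" where
  "lhs x = (\<Sum>j=s..m. \<Sum>k=s..n. qpoch x q j * qpoch x q k * kernel j k)"

lemma summand_eq:
  "qpoch (q powi (- int n)) q j * qpoch (q powi (- int n)) q k
      * qpoch x q j * qpoch x q k
      * qpoch (q powi (int j - int m - int h + 1)) q (h - 1)
      * qpoch (q powi (int k - int m - int h + 1)) q (h - 1)
      * (1 - q powi (int k - int j)) * q ^ (2 * j + k)
      / (qpoch q q (j - s) * qpoch q q (j + s) * qpoch q q (k - s) * qpoch q q (k + s))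
   = qpoch x q j * qpoch x q k * kernel j k"
proof -
  have "q powi (int k - int j) * q powi int (2 * j + k) = q powi (int k - int j + int (2 * j + k))"
    by (simp only: power_int_add_q)
  also have "int k - int j + int (2 * j + k) = int (j + 2 * k)" by simp
  finally have "q powi (int k - int j) * q ^ (2 * j + k) = q ^ (j + 2 * k)"
    by (simp only: power_int_of_nat)
  then have "(1 - q powi (int k - int j)) * q ^ (2 * j + k) = q ^ (2 * j + k) - q ^ (j + 2 * k)"
    by (simp add: algebra_simps)
  then show ?thesis
    unfolding kernel_def weight_def using qpoch_q_nonzero by (simp add: field_simps)
qed

definition tail_poly :: "nat \<Rightarrow> 'a poly" where
  "tail_poly = linprod (\<lambda>i. q ^ (s + i))"

lemma qpoch_tail: "s \<le> j \<Longrightarrow> qpoch x q j = qpoch x q s * poly (tail_poly (j - s)) x"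
  using qpoch_add[of x q s "j - s"]
  by (simp add: tail_poly_def poly_linprod qpoch_def power_add mult_ac)

lemma tail_poly_lead: "degree (tail_poly l) = l \<and> coeff (tail_poly l) l = (\<Prod>i<l. - (q ^ (s + i)))"
  using linprod_lead[of "\<lambda>i. q ^ (s + i)" l] q_nonzero by (simp add: tail_poly_def)

definition lhs_poly :: "'a poly" where
  "lhs_poly = (\<Sum>j=s..m. \<Sum>k=s..n. smult (kernel j k) (tail_poly (j - s) * tail_poly (k - s)))"

definition lhs_degree :: nat where
  "lhs_degree = (m - s) + (n - s)"

definition lead :: 'a where
  "lead = kernel m n * (\<Prod>i<m - s. - (q ^ (s + i))) * (\<Prod>i<n - s. - (q ^ (s + i)))"

lemma lhs_eq_poly: "lhs x = qpoch x q s ^ 2 * poly lhs_poly x"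
proof -
  have "lhs x = (\<Sum>j=s..m. \<Sum>k=s..n.
      qpoch x q s ^ 2 * (kernel j k * (poly (tail_poly (j - s)) x * poly (tail_poly (k - s)) x)))"
    unfolding lhs_def
  proof (intro sum.cong refl)
    fix j k assume "j \<in> {s..m}" "k \<in> {s..n}"
    then show "qpoch x q j * qpoch x q k * kernel j k = qpoch x q s ^ 2
        * (kernel j k * (poly (tail_poly (j - s)) x * poly (tail_poly (k - s)) x))"
      by (simp add: qpoch_tail[of j] qpoch_tail[of k] power2_eq_square mult_ac)
  qed
  then show ?thesis
    by (simp add: lhs_poly_def poly_sum sum_distrib_left)
qed

lemma degree_summand:
  "degree (tail_poly (j - s) * tail_poly (k - s)) \<le> (j - s) + (k - s)"
  using degree_mult_le[of "tail_poly (j - s)" "tail_poly (k - s)"] by (simp add: tail_poly_lead)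

lemma degree_lhs_poly: "degree lhs_poly \<le> lhs_degree"
  unfolding lhs_poly_def
proof (intro degree_sum_le finite_atLeastAtMost)
  fix j k assume "j \<in> {s..m}" "k \<in> {s..n}"
  then have "(j - s) + (k - s) \<le> lhs_degree" by (auto simp: lhs_degree_def)
  then show "degree (smult (kernel j k) (tail_poly (j - s) * tail_poly (k - s))) \<le> lhs_degree"
    using degree_summand[of j k] degree_smult_le[of "kernel j k" "tail_poly (j - s) * tail_poly (k - s)"]
    by linarith
qed

text \<open>Only the summand \<open>j = m, k = n\<close> reaches the top degree.\<close>
lemma coeff_lhs_poly: "coeff lhs_poly lhs_degree = lead"
proof -
  have top: "coeff (smult (kernel j k) (tail_poly (j - s) * tail_poly (k - s))) lhs_degree
      = (if j = m \<and> k = n then lead else 0)" if "j \<in> {s..m}" "k \<in> {s..n}" for j k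
  proof (cases "j = m \<and> k = n")
    case True
    then show ?thesis
      using coeff_mult_degree_sum[of "tail_poly (m - s)" "tail_poly (n - s)"]
      by (simp add: tail_poly_lead lead_def lhs_degree_def)
  next
    case False
    with that have "(j - s) + (k - s) < lhs_degree" by (auto simp: lhs_degree_def)
    then show ?thesis using False degree_summand[of j k] by (auto simp: coeff_eq_0)
  qed
  have "coeff lhs_poly lhs_degree = (\<Sum>j=s..m. \<Sum>k=s..n. if j = m \<and> k = n then lead else 0)"
    unfolding lhs_poly_def coeff_sum by (intro sum.cong refl top) auto
  also have "\<dots> = (\<Sum>j=s..m. if j = m then lead else 0)"
  proof (intro sum.cong refl)
    fix j
    have "(\<Sum>k=s..n. if k = n then lead else 0) = lead"
      using s_le_m m_less_n by (subst sum.delta) auto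
    then show "(\<Sum>k=s..n. if j = m \<and> k = n then lead else 0) = (if j = m then lead else 0)"
      by simp
  qed
  also have "\<dots> = lead" using s_le_m by (subst sum.delta) auto
  finally show ?thesis .
qed

text \<open>The factor \<open>(q^(k-m-h+1);q)_(h-1)\<close> kills the weights strictly between \<open>m\<close> and
  \<open>m + h\<close>.\<close>
lemma weight_vanish: assumes "m < k" "k < m + h" shows "weight k = 0"
proof -
  have "qpoch (q powi (int k - int m - int h + 1)) q (h - 1) = 0"
  proof (rule qpoch_eq_0I[of "m + h - 1 - k"])
    show "m + h - 1 - k < h - 1" using assms by linarith
    have "q powi (int k - int m - int h + 1) * q powi int (m + h - 1 - k)
        = q powi (int k - int m - int h + 1 + int (m + h - 1 - k))"
      by (simp only: power_int_add_q)
    also have "int k - int m - int h + 1 + int (m + h - 1 - k) = 0"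
      using assms by (simp add: of_nat_diff)
    finally show "q powi (int k - int m - int h + 1) * q ^ (m + h - 1 - k) = 1" by simp
  qed
  then show ?thesis by (simp add: weight_def)
qed

text \<open>At \<open>x = q^-i\<close> with \<open>s \<le> i < m + h\<close> both sums are cut down to the same range
  \<open>s..min m i\<close>, where the antisymmetry of the kernel makes the double sum vanish.\<close>
lemma lhs_root_neg: assumes "s \<le> i" "i < m + h" shows "lhs (q powi (- int i)) = 0"
proof -
  define x where "x = q powi (- int i)"
  define M where "M = min m i"
  define T where "T = (\<lambda>j k. qpoch x q j * qpoch x q k * kernel j k)"
  have x_vanish: "qpoch x q j = 0" if "i < j" for j
    unfolding x_def using qpoch_neg_power_vanish that .
  have inner: "(\<Sum>k=s..n. T j k) = (\<Sum>k=s..M. T j k)" for j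
  proof (rule sum.mono_neutral_right)
    show "\<forall>k\<in>{s..n} - {s..M}. T j k = 0"
    proof
      fix k assume k: "k \<in> {s..n} - {s..M}"
      show "T j k = 0"
      proof (cases "i < k")
        case False
        then have "m < k" "k < m + h" using k assms by (auto simp: M_def)
        then show ?thesis by (simp add: T_def kernel_def weight_vanish)
      qed (simp add: T_def x_vanish)
    qed
  qed (use m_less_n in \<open>auto simp: M_def\<close>)
  have outer: "(\<Sum>j=s..m. \<Sum>k=s..M. T j k) = (\<Sum>j=s..M. \<Sum>k=s..M. T j k)"
  proof (rule sum.mono_neutral_right)
    show "\<forall>j\<in>{s..m} - {s..M}. (\<Sum>k=s..M. T j k) = 0"
      using assms by (auto simp: M_def T_def x_vanish)
  qed (auto simp: M_def)
  have "lhs x = (\<Sum>j=s..m. \<Sum>k=s..n. T j k)" by (simp add: lhs_def T_def)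
  also have "\<dots> = (\<Sum>j=s..M. \<Sum>k=s..M. T j k)" unfolding inner outer ..
  also have "\<dots> = 0"
    by (rule double_sum_antisym_0) (simp add: T_def kernel_def algebra_simps)
  finally show ?thesis unfolding x_def .
qed

text \<open>For \<open>x = q^e\<close> the weighted sums over \<open>k\<close> become q-binomial moments of a polynomial
  in \<open>q^t\<close>, \<open>t = k - s\<close>, of degree \<open>e - 1 - s + h - 1\<close>.\<close>
definition moment_poly :: "nat \<Rightarrow> 'a poly" where
  "moment_poly e = linprod (\<lambda>i. q ^ (s + s + 1 + i)) (e - 1 - s)
     * linprod (\<lambda>i. q powi (int s - int m - int h + 1) * q ^ i) (h - 1)"

lemma degree_moment_poly: "degree (moment_poly e) \<le> (e - 1 - s) + (h - 1)"
  unfolding moment_poly_def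
  by (rule order.trans[OF degree_mult_le add_mono[OF degree_linprod_le degree_linprod_le]])

lemma weight_term_qbin:
  assumes "Suc s \<le> e"
  shows "qpoch (q ^ e) q (t + s) * weight (t + s)
    = qpoch (q powi (- int n)) q s / qpoch q q (e - 1)
      * (qbin_coeff (n - s) t * poly (moment_poly e) (q ^ t))"
proof -
  define k where "k = t + s"
  define L where "L = e - 1 - s"
  have num: "qpoch (q powi (- int n)) q k = qpoch (q powi (- int n)) q s * qpoch (q powi (- int (n - s))) q t"
    unfolding k_def by (rule qpoch_neg_power_split) (use s_plus_h_le_n in linarith)
  have x_factor: "qpoch (q ^ e) q k * qpoch q q (e - 1) = qpoch q q (k + s) * qpoch (q * q ^ (k + s)) q L"
  proof -
    have "q * q ^ (e - 1) = q ^ e" using assms by (cases e) auto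
    then have "qpoch q q ((e - 1) + k) = qpoch q q (e - 1) * qpoch (q ^ e) q k"
      using qpoch_add[of q q "e - 1" k] by simp
    moreover have "(e - 1) + k = (k + s) + L" using assms by (simp add: L_def k_def)
    ultimately show ?thesis using qpoch_add[of q q "k + s" L] by (simp add: ac_simps)
  qed
  have first_factor: "qpoch (q * q ^ (k + s)) q L = (\<Prod>i<L. 1 - q ^ (s + s + 1 + i) * q ^ t)"
    unfolding qpoch_def k_def by (intro prod.cong refl) (simp add: power_add mult_ac)
  have second_factor: "qpoch (q powi (int k - int m - int h + 1)) q (h - 1)
      = (\<Prod>i<h - 1. 1 - q powi (int s - int m - int h + 1) * q ^ i * q ^ t)"
  proof -
    have "int k - int m - int h + 1 = int s - int m - int h + 1 + int t" by (simp add: k_def)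
    then have "q powi (int k - int m - int h + 1) = q powi (int s - int m - int h + 1 + int t)"
      by (simp only:)
    also have "\<dots> = q powi (int s - int m - int h + 1) * q ^ t"
      by (simp only: power_int_add_q power_int_of_nat)
    finally show ?thesis unfolding qpoch_def by (intro prod.cong refl) (simp add: mult_ac)
  qed
  have "qpoch (q ^ e) q k = qpoch q q (k + s) * qpoch (q * q ^ (k + s)) q L / qpoch q q (e - 1)"
    using x_factor qpoch_q_nonzero by (simp add: eq_divide_eq)
  then show ?thesis
    unfolding k_def[symmetric] weight_def num qbin_coeff_def moment_poly_def poly_mult
      poly_linprod L_def[symmetric]
    using first_factor second_factor qpoch_q_nonzero
    by (simp add: k_def field_simps)
qed

text \<open>The weighted moments needed for the kernel (\<open>a = 1, 2\<close>) therefore vanish.\<close>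
lemma weight_moment_vanish:
  assumes "Suc s \<le> e" "e \<le> n - h" "a \<in> {1, 2}"
  shows "(\<Sum>k=s..n. qpoch (q ^ e) q k * weight k * (q ^ k) ^ a) = 0"
proof -
  define N where "N = n - s"
  define c where "c = qpoch (q powi (- int n)) q s / qpoch q q (e - 1) * (q ^ s) ^ a"
  have n: "n = N + s" using s_plus_h_le_n by (simp add: N_def)
  have "(\<Sum>k=s..n. qpoch (q ^ e) q k * weight k * (q ^ k) ^ a)
      = (\<Sum>t=0..N. qpoch (q ^ e) q (t + s) * weight (t + s) * (q ^ (t + s)) ^ a)"
    unfolding n by (rule sum.shift_bounds_cl_nat_ivl[of _ 0 s N, simplified])
  also have "\<dots> = c * (\<Sum>t\<le>N. qbin_coeff N t * (q ^ t) ^ a * poly (moment_poly e) (q ^ t))"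
    unfolding sum_distrib_left atLeast0AtMost
    by (intro sum.cong refl)
      (simp add: weight_term_qbin[OF assms(1)] c_def N_def power_add power_mult_distrib mult_ac)
  also have "(\<Sum>t\<le>N. qbin_coeff N t * (q ^ t) ^ a * poly (moment_poly e) (q ^ t)) = 0"
    using assms h_pos degree_moment_poly[of e] by (intro qbin_moment_vanish) (auto simp: N_def)
  finally show ?thesis by simp
qed

text \<open>At \<open>x = q^e\<close> with \<open>s < e \<le> n - h\<close> the kernel splits into products of one-variable
  terms, each of which is a vanishing weighted moment.\<close>
lemma lhs_root_pos: assumes "Suc s \<le> e" "e \<le> n - h" shows "lhs (q ^ e) = 0"
proof -
  define x where "x = q ^ e"
  define Q where "Q = (\<lambda>a. \<Sum>k=s..n. qpoch x q k * weight k * (q ^ k) ^ a)"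
  have Q_vanish: "Q 1 = 0" "Q 2 = 0"
    unfolding Q_def x_def using assms weight_moment_vanish[of e 1] weight_moment_vanish[of e 2]
    by simp_all
  have row: "(\<Sum>k=s..n. qpoch x q j * qpoch x q k * kernel j k)
      = qpoch x q j * weight j * q ^ (2 * j) * Q 1 - qpoch x q j * weight j * q ^ j * Q 2" for j
  proof -
    have "q ^ (2 * j + k) = q ^ (2 * j) * (q ^ k) ^ 1" "q ^ (j + 2 * k) = q ^ j * (q ^ k) ^ 2" for k
      by (simp_all add: power_add power_mult[symmetric] mult.commute)
    then show ?thesis
      unfolding Q_def kernel_def
      by (simp add: sum_distrib_left sum_subtractf[symmetric] algebra_simps)
  qed
  show ?thesis unfolding x_def[symmetric] lhs_def row Q_vanish by simp
qed

definition root_list :: "'a list" where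
  "root_list = map (\<lambda>i. q powi (- int i)) [s..<m + h] @ map (\<lambda>e. q ^ e) [Suc s..<Suc (n - h)]"

lemma length_root_list: "length root_list = lhs_degree"
  using s_plus_h_le_n s_le_m unfolding root_list_def lhs_degree_def by simp linarith

lemma distinct_root_list: "distinct root_list"
proof -
  have "inj_on (\<lambda>i. q powi (- int i)) (set [s..<m + h])"
    by (rule inj_onI) (simp add: power_int_inj)
  moreover have "inj_on (\<lambda>e::nat. q ^ e) (set [Suc s..<Suc (n - h)])"
    by (rule inj_onI) (use power_int_inj[of "int _" "int _"] in simp)
  moreover have "q powi (- int i) \<noteq> q ^ e" if "Suc s \<le> e" for i e
    using that power_int_inj[of "- int i" "int e"] by simp
  ultimately show ?thesis unfolding root_list_def by (auto simp: distinct_map)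
qed

lemma root_list_roots: "r \<in> set root_list \<Longrightarrow> poly lhs_poly r = 0"
proof -
  assume "r \<in> set root_list"
  then consider (neg) i where "s \<le> i" "i < m + h" "r = q powi (- int i)"
    | (pos) e where "Suc s \<le> e" "e \<le> n - h" "r = q ^ e"
    unfolding root_list_def by auto
  then show "poly lhs_poly r = 0"
  proof cases
    case neg
    have "qpoch r q s \<noteq> 0"
    proof (rule qpoch_nonzero)
      fix l assume "l < s"
      have "r * q ^ l = q powi (- int i + int l)"
        by (simp only: neg(3) power_int_add_q power_int_of_nat)
      then show "r * q ^ l \<noteq> 1" using neg \<open>l < s\<close> by (simp add: power_int_eq_1_iff)
    qed
    then show ?thesis using lhs_root_neg[of i] lhs_eq_poly[of r] neg by simp
  next
    case pos
    have "qpoch r q s \<noteq> 0"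
      by (rule qpoch_nonzero) (use pos q_not_root[of "e + _"] in \<open>simp add: power_add\<close>)
    then show ?thesis using lhs_root_pos[of e] lhs_eq_poly[of r] pos by simp
  qed
qed

lemma lhs_factorization:
  "lhs x = qpoch x q s ^ 2 * lead
     * ((\<Prod>i\<in>{s..<m + h}. x - q powi (- int i)) * (\<Prod>e\<in>{Suc s..<Suc (n - h)}. x - q ^ e))"
proof -
  have "lhs_poly = smult (coeff lhs_poly (length root_list)) (\<Prod>r\<leftarrow>root_list. [:- r, 1:])"
    using degree_lhs_poly length_root_list distinct_root_list root_list_roots
    by (intro poly_eq_smult_roots) simp_all
  then have "poly lhs_poly x = lead * (\<Prod>r\<leftarrow>root_list. x - r)"
    using length_root_list coeff_lhs_poly by (metis poly_smult poly_prod_linear)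
  then show ?thesis
    by (simp add: lhs_eq_poly root_list_def prod_list_upt o_def del: upt_Suc)
qed

lemma qpoch_as_root_product:
  "qpoch x q (m + h) = qpoch x q s * (\<Prod>i\<in>{s..<m + h}. - (q ^ i)) * (\<Prod>i\<in>{s..<m + h}. x - q powi (- int i))"
proof -
  have "qpoch x q (m + h) = qpoch x q s * qpoch (x * q ^ s) q (m + h - s)"
    using qpoch_add[of x q s "m + h - s"] s_le_m by simp
  also have "qpoch (x * q ^ s) q (m + h - s) = (\<Prod>i\<in>{s..<m + h}. 1 - x * q ^ i)"
  proof -
    have "qpoch (x * q ^ s) q (m + h - s) = (\<Prod>l\<in>{0..<m + h - s}. 1 - x * q ^ (l + s))"
      unfolding qpoch_def by (simp add: atLeast0LessThan power_add mult_ac)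
    also have "\<dots> = (\<Prod>i\<in>{s..<m + h}. 1 - x * q ^ i)"
      using prod.shift_bounds_nat_ivl[of "\<lambda>i. 1 - x * q ^ i" 0 s "m + h - s"] s_le_m by simp
    finally show ?thesis .
  qed
  also have "\<dots> = (\<Prod>i\<in>{s..<m + h}. - (q ^ i) * (x - q powi (- int i)))"
  proof (intro prod.cong refl)
    fix i
    have "q ^ i * q powi (- int i) = 1" using q_nonzero by (simp add: power_int_minus)
    then show "1 - x * q ^ i = - (q ^ i) * (x - q powi (- int i))" by (simp add: algebra_simps)
  qed
  also have "\<dots> = (\<Prod>i\<in>{s..<m + h}. - (q ^ i)) * (\<Prod>i\<in>{s..<m + h}. x - q powi (- int i))"
    by (rule prod.distrib)
  finally show ?thesis by (simp only: mult.assoc)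
qed

lemma qpoch_reciprocal_as_root_product:
  assumes "x \<noteq> 0"
  shows "qpoch (q ^ (s + 1) / x) q (n - s - h) * x ^ (n - s - h) = (\<Prod>e\<in>{Suc s..<Suc (n - h)}. x - q ^ e)"
proof -
  have "qpoch (q ^ (s + 1) / x) q (n - s - h) * x ^ (n - s - h)
      = (\<Prod>l\<in>{0..<n - s - h}. (1 - q ^ (s + 1) / x * q ^ l) * x)"
    unfolding qpoch_def by (simp add: prod.distrib atLeast0LessThan)
  also have "\<dots> = (\<Prod>l\<in>{0..<n - s - h}. x - q ^ (l + Suc s))"
    using assms by (intro prod.cong refl) (simp add: field_simps power_add)
  also have "\<dots> = (\<Prod>e\<in>{Suc s..<Suc (n - h)}. x - q ^ e)"
    using prod.shift_bounds_nat_ivl[of "\<lambda>e. x - q ^ e" 0 "Suc s" "n - s - h"] s_plus_h_le_n by simp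
  finally show ?thesis .
qed

text \<open>Exponents of \<open>q\<close> arising in the closed forms of the weights at \<open>m\<close> and \<open>n\<close>, in
  \<open>lead\<close>, in the product of the roots \<open>q^-i\<close>, and in the statement of the theorem.\<close>
definition exp_m :: nat where
  "exp_m = (\<Sum>i<m. n - i) + (\<Sum>i<h - 1. h - 1 - i)"

definition exp_n :: nat where
  "exp_n = (\<Sum>i<n. n - i)"

definition exp_lead :: nat where
  "exp_lead = 2 * m + n + (\<Sum>i<m - s. s + i) + (\<Sum>i<n - s. s + i)"

definition exp_roots :: nat where
  "exp_roots = (\<Sum>i\<in>{s..<m + h}. i)"

definition rhs_exponent :: int where
  "rhs_exponent = (int m ^ 2 + 3 * int m - int s ^ 2 + int s) div 2
     - int m * int n - int m * int h - int h ^ 2 + int h"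

lemma weight_m_closed:
  "weight m * (q ^ exp_m * qpoch q q (n - m) * qpoch q q (m - s) * qpoch q q (m + s))
     = (-1) ^ (m + h - 1) * qpoch q q n * qpoch q q (h - 1)"
proof -
  have first: "qpoch (q powi (- int n)) q m * qpoch q q (n - m) * q ^ (\<Sum>i<m. n - i)
      = (-1) ^ m * qpoch q q n"
    by (rule qpoch_reverse) (use m_less_n in linarith)
  have base: "int m - int m - int h + 1 = - int (h - 1)" using h_pos by (simp add: of_nat_diff)
  have second: "qpoch (q powi (int m - int m - int h + 1)) q (h - 1) * q ^ (\<Sum>i<h - 1. h - 1 - i)
      = (-1) ^ (h - 1) * qpoch q q (h - 1)"
    unfolding base using qpoch_reverse[of "h - 1" "h - 1"]
    by (simp only: order.refl diff_self_eq_0 qpoch_0 mult_1_right)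
  have "weight m * (q ^ exp_m * qpoch q q (n - m) * qpoch q q (m - s) * qpoch q q (m + s))
      = (qpoch (q powi (- int n)) q m * qpoch q q (n - m) * q ^ (\<Sum>i<m. n - i))
        * (qpoch (q powi (int m - int m - int h + 1)) q (h - 1) * q ^ (\<Sum>i<h - 1. h - 1 - i))"
    unfolding weight_def exp_m_def using qpoch_q_nonzero by (simp add: field_simps power_add)
  also have "\<dots> = (-1) ^ m * (-1) ^ (h - 1) * qpoch q q n * qpoch q q (h - 1)"
    unfolding first second by (simp add: mult_ac)
  also have "(-1) ^ m * (-1) ^ (h - 1) = ((-1) ^ (m + h - 1) :: 'a)"
    using h_pos by (simp add: power_add[symmetric])
  finally show ?thesis .
qed

lemma qpoch_top_block:
  "qpoch (q powi (int n - int m - int h + 1)) q (h - 1) * (1 - q ^ (n - m))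
      * qpoch q q (n - m - h) = qpoch q q (n - m)"
proof -
  have exponent: "int n - int m - int h + 1 = int (n - m - h) + 1"
    using h_le m_less_n by (simp add: of_nat_diff)
  have base: "q powi (int n - int m - int h + 1) = q * q ^ (n - m - h)"
    unfolding exponent power_int_add_q by simp
  have "Suc (n - m - h + (h - 1)) = n - m" using h_pos h_le by simp
  then have last_factor: "q * q ^ (n - m - h) * q ^ (h - 1) = q ^ (n - m)"
    by (metis power_add power_Suc mult.assoc)
  have "h = Suc (h - 1)" using h_pos by simp
  then have "qpoch (q * q ^ (n - m - h)) q h
      = qpoch (q * q ^ (n - m - h)) q (h - 1) * (1 - q ^ (n - m))"
    using qpoch_Suc[of "q * q ^ (n - m - h)" q "h - 1"] last_factor by simp
  moreover have "qpoch q q (n - m) = qpoch q q (n - m - h) * qpoch (q * q ^ (n - m - h)) q h"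
    using qpoch_add[of q q "n - m - h" h] h_le by (simp only: le_add_diff_inverse2)
  ultimately show ?thesis unfolding base by (simp add: mult_ac)
qed

lemma weight_n_closed:
  "weight n * (1 - q ^ (n - m)) * (q ^ exp_n * qpoch q q (n - m - h) * qpoch q q (n - s) * qpoch q q (n + s))
     = (-1) ^ n * qpoch q q n * qpoch q q (n - m)"
proof -
  have first: "qpoch (q powi (- int n)) q n * q ^ exp_n = (-1) ^ n * qpoch q q n"
    using qpoch_reverse[of n n] unfolding exp_n_def
    by (simp only: order.refl diff_self_eq_0 qpoch_0 mult_1_right)
  have "weight n * (1 - q ^ (n - m)) * (q ^ exp_n * qpoch q q (n - m - h) * qpoch q q (n - s) * qpoch q q (n + s))
      = (qpoch (q powi (- int n)) q n * q ^ exp_n)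
        * (qpoch (q powi (int n - int m - int h + 1)) q (h - 1) * (1 - q ^ (n - m)) * qpoch q q (n - m - h))"
    unfolding weight_def using qpoch_q_nonzero by (simp add: field_simps)
  also have "\<dots> = (-1) ^ n * qpoch q q n * qpoch q q (n - m)"
    unfolding first qpoch_top_block by (simp add: mult_ac)
  finally show ?thesis .
qed

text \<open>The exponents match: a polynomial identity once the arithmetic progressions are summed.\<close>
lemma exponent_identity:
  "int exp_roots + rhs_exponent + int exp_m + int exp_n = int exp_lead"
proof -
  have ring_identity: "2 * (p3 + (e - m * n - m * h - h ^ 2 + h) + (p4 + p5) + p6) = 2 * (2 * m + n + p1 + p2)"
    if "2 * p1 = 2 * (m - s) * s + (m - s) * ((m - s) - 1)"
      "2 * p2 = 2 * (n - s) * s + (n - s) * ((n - s) - 1)"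
      "2 * p3 = 2 * (m + h - s) * s + (m + h - s) * ((m + h - s) - 1)"
      "2 * p4 = 2 * m * n - m * (m - 1)"
      "2 * p5 = 2 * (h - 1) * (h - 1) - (h - 1) * ((h - 1) - 1)"
      "2 * p6 = 2 * n * n - n * (n - 1)"
      "2 * e = m ^ 2 + 3 * m - s ^ 2 + s"
    for m n h s p1 p2 p3 p4 p5 p6 e :: int
    using that by (simp add: algebra_simps power2_eq_square)
  have roots: "exp_roots = (\<Sum>i<m + h - s. s + i)"
    using sum.shift_bounds_nat_ivl[of "\<lambda>i. i" 0 s "m + h - s"] s_le_m
    by (simp add: exp_roots_def atLeast0LessThan add.commute)
  have "even (int m ^ 2 + 3 * int m - int s ^ 2 + int s)"
    by (simp add: power2_eq_square even_add even_mult_iff)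
  then have half: "2 * ((int m ^ 2 + 3 * int m - int s ^ 2 + int s) div 2)
      = int m ^ 2 + 3 * int m - int s ^ 2 + int s"
    by (rule even_two_times_div_two)
  have diffs: "int (m - s) = int m - int s" "int (n - s) = int n - int s"
    "int (m + h - s) = int m + int h - int s" "int (h - 1) = int h - 1"
    using s_le_m m_less_n h_pos by (simp_all add: of_nat_diff)
  note sums = sum_shifted_range[of s "m - s"] sum_shifted_range[of s "n - s"]
    sum_shifted_range[of s "m + h - s"] sum_reversed_range[OF less_imp_le[OF m_less_n]]
    sum_reversed_range[of "h - 1" "h - 1", OF order.refl] sum_reversed_range[of n n, OF order.refl]
  have "2 * (int exp_roots + rhs_exponent + int exp_m + int exp_n) = 2 * int exp_lead"
    unfolding roots exp_m_def exp_n_def exp_lead_def rhs_exponent_def of_nat_add of_nat_mult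
      of_nat_numeral
    using ring_identity[OF sums[unfolded diffs] half] m_less_n by simp
  then show ?thesis by simp
qed

lemma minus_one_powi: "(-1 :: 'a) powi (int m - int s - 1) = - ((-1) ^ (m - s))"
proof -
  have "(-1 :: 'a) powi (int (m - s) - 1) * (-1) = (-1) powi int (m - s)"
    by (rule power_int_minus_mult) simp
  then have shifted: "(-1 :: 'a) powi (int (m - s) - 1) = - ((-1) ^ (m - s))"
    by (metis power_int_of_nat mult_minus1_right minus_minus)
  have "int m - int s - 1 = int (m - s) - 1" using s_le_m by (simp add: of_nat_diff)
  then show ?thesis unfolding shifted[symmetric] by (simp only:)
qed

lemma sign_identity:
  "(-1 :: 'a) ^ (m + h - s) / (- ((-1) ^ (m - s))) = (-1) ^ (m + h - 1 + n + (m - s) + (n - s))"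
proof -
  have "Suc (m + h - 1 + n + (m - s) + (n - s)) = (m + h - s) + (m - s) + 2 * n"
    using h_pos s_le_m m_less_n by linarith
  then have "even (m + h - 1 + n + (m - s) + (n - s)) \<longleftrightarrow> odd ((m + h - s) + (m - s))"
    by (metis even_Suc even_add even_mult_iff even_numeral)
  moreover have "(-1 :: 'a) ^ a = - ((-1) ^ b)" if "even a \<longleftrightarrow> odd b" for a b
    using that by (simp add: minus_one_power_iff)
  ultimately have "(-1 :: 'a) ^ (m + h - 1 + n + (m - s) + (n - s)) = - ((-1) ^ ((m + h - s) + (m - s)))"
    by blast
  also have "\<dots> = (-1) ^ (m + h - s) / (- ((-1) ^ (m - s)))"
    by (simp add: minus_one_power_iff power_add)
  finally show ?thesis by simp
qed

lemma lead_closed_form: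
  "lead * ((q ^ exp_m * qpoch q q (n - m) * qpoch q q (m - s) * qpoch q q (m + s))
     * (q ^ exp_n * qpoch q q (n - m - h) * qpoch q q (n - s) * qpoch q q (n + s)))
   = (-1) ^ (m + h - 1 + n + (m - s) + (n - s))
     * (qpoch q q n ^ 2 * qpoch q q (h - 1) * qpoch q q (n - m)) * q ^ exp_lead"
proof -
  have "m + 2 * n = (2 * m + n) + (n - m)" using m_less_n by simp
  then have "q ^ (m + 2 * n) = q ^ (2 * m + n) * q ^ (n - m)" by (simp only: power_add)
  then have "q ^ (2 * m + n) - q ^ (m + 2 * n) = q ^ (2 * m + n) * (1 - q ^ (n - m))"
    by (simp add: algebra_simps)
  moreover have "(\<Prod>i<m - s. - (q ^ (s + i))) = (-1) ^ (m - s) * q ^ (\<Sum>i<m - s. s + i)"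
    "(\<Prod>i<n - s. - (q ^ (s + i))) = (-1) ^ (n - s) * q ^ (\<Sum>i<n - s. s + i)"
    by (simp_all add: prod_neg_powers)
  ultimately have "lead * ((q ^ exp_m * qpoch q q (n - m) * qpoch q q (m - s) * qpoch q q (m + s))
     * (q ^ exp_n * qpoch q q (n - m - h) * qpoch q q (n - s) * qpoch q q (n + s)))
   = (weight m * (q ^ exp_m * qpoch q q (n - m) * qpoch q q (m - s) * qpoch q q (m + s)))
     * (weight n * (1 - q ^ (n - m))
        * (q ^ exp_n * qpoch q q (n - m - h) * qpoch q q (n - s) * qpoch q q (n + s)))
     * q ^ (2 * m + n) * ((-1) ^ (m - s) * q ^ (\<Sum>i<m - s. s + i))
     * ((-1) ^ (n - s) * q ^ (\<Sum>i<n - s. s + i))"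
    unfolding lead_def kernel_def by (simp add: mult_ac)
  also have "\<dots> = (-1) ^ (m + h - 1 + n + (m - s) + (n - s))
     * (qpoch q q n ^ 2 * qpoch q q (h - 1) * qpoch q q (n - m)) * q ^ exp_lead"
    unfolding weight_m_closed weight_n_closed exp_lead_def
    by (simp add: power_add power2_eq_square mult_ac)
  finally show ?thesis .
qed

lemma rhs_constant_eq_lead:
  "qpoch q q n ^ 2 * qpoch q q (h - 1) * (\<Prod>i\<in>{s..<m + h}. - (q ^ i)) * q powi rhs_exponent
    / ((-1) powi (int m - int s - 1) * qpoch q q (m - s) * qpoch q q (m + s) * qpoch q q (n - s)
       * qpoch q q (n + s) * qpoch q q (n - m - h)) = lead"
  (is "?c = _")
proof -
  define Dm where "Dm = q ^ exp_m * qpoch q q (n - m) * qpoch q q (m - s) * qpoch q q (m + s)"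
  define Dn where "Dn = q ^ exp_n * qpoch q q (n - m - h) * qpoch q q (n - s) * qpoch q q (n + s)"
  have nonzero: "Dm * Dn \<noteq> 0"
    unfolding Dm_def Dn_def using qpoch_q_nonzero q_nonzero by simp
  have roots: "(\<Prod>i\<in>{s..<m + h}. - (q ^ i)) = (-1) ^ (m + h - s) * q ^ exp_roots"
    by (simp add: prod_neg_powers exp_roots_def)
  have powers: "q ^ exp_roots * q powi rhs_exponent * q ^ exp_m * q ^ exp_n = q ^ exp_lead"
    using exponent_identity
    by (metis power_int_add_q power_int_of_nat)
  have "?c * (Dm * Dn) = (qpoch q q n ^ 2 * qpoch q q (h - 1) * qpoch q q (n - m))
      * ((-1) ^ (m + h - s) / (- ((-1) ^ (m - s))))
      * (q ^ exp_roots * q powi rhs_exponent * q ^ exp_m * q ^ exp_n)"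
    unfolding minus_one_powi roots Dm_def Dn_def using qpoch_q_nonzero by (simp add: field_simps)
  also have "\<dots> = lead * (Dm * Dn)"
    unfolding sign_identity powers lead_closed_form[folded Dm_def Dn_def] by (simp add: mult_ac)
  finally show ?thesis by (rule mult_right_cancel[OF nonzero, THEN iffD1])
qed

lemma lhs_closed_form:
  assumes "x \<noteq> 0"
  shows "lhs x = qpoch q q n ^ 2 * qpoch q q (h - 1) * qpoch x q s * qpoch x q (m + h)
      * qpoch (q ^ (s + 1) / x) q (n - s - h) * x ^ (n - s - h) * q powi rhs_exponent
      / ((-1) powi (int m - int s - 1) * qpoch q q (m - s) * qpoch q q (m + s)
         * qpoch q q (n - s) * qpoch q q (n + s) * qpoch q q (n - m - h))"
proof -
  define roots_neg where "roots_neg = (\<Prod>i\<in>{s..<m + h}. x - q powi (- int i))"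
  define den where "den = (-1) powi (int m - int s - 1) * qpoch q q (m - s) * qpoch q q (m + s)
    * qpoch q q (n - s) * qpoch q q (n + s) * qpoch q q (n - m - h)"
  have "lhs x = qpoch x q s ^ 2 * lead * (roots_neg * (\<Prod>e\<in>{Suc s..<Suc (n - h)}. x - q ^ e))"
    unfolding lhs_factorization roots_neg_def ..
  also have "\<dots> = (qpoch q q n ^ 2 * qpoch q q (h - 1) * (\<Prod>i\<in>{s..<m + h}. - (q ^ i))
        * q powi rhs_exponent / den)
      * (qpoch x q s ^ 2 * (roots_neg * (qpoch (q ^ (s + 1) / x) q (n - s - h) * x ^ (n - s - h))))"
    unfolding den_def rhs_constant_eq_lead qpoch_reciprocal_as_root_product[OF assms]
    by (simp only: mult_ac)
  also have "\<dots> = qpoch q q n ^ 2 * qpoch q q (h - 1) * qpoch x q s * qpoch x q (m + h)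
      * qpoch (q ^ (s + 1) / x) q (n - s - h) * x ^ (n - s - h) * q powi rhs_exponent / den"
    unfolding qpoch_as_root_product roots_neg_def
    by (simp add: power2_eq_square mult_ac times_divide_eq_left)
  finally show ?thesis unfolding den_def .
qed

end

theorem lemma4p3:
  fixes n h m s :: nat and q x :: complex
  assumes "n > 0" and "h > 0" and "h \<le> n - m" and "s \<le> m"
    and "q \<noteq> 0" and "x \<noteq> 0" and "\<forall>i::nat. i > 0 \<longrightarrow> q ^ i \<noteq> 1"
  shows "(\<Sum>j=s..m. \<Sum>k=s..n.
      qpoch (q powi (- int n)) q j * qpoch (q powi (- int n)) q k
      * qpoch x q j * qpoch x q k
      * qpoch (q powi (int j - int m - int h + 1)) q (h - 1)
      * qpoch (q powi (int k - int m - int h + 1)) q (h - 1)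
      * (1 - q powi (int k - int j)) * q ^ (2 * j + k)
      / (qpoch q q (j - s) * qpoch q q (j + s) * qpoch q q (k - s) * qpoch q q (k + s)))
    = (qpoch q q n) ^ 2 * qpoch q q (h - 1) * qpoch x q s * qpoch x q (m + h)
      * qpoch (q ^ (s + 1) / x) q (n - s - h) * x ^ (n - s - h)
      * q powi ((int m ^ 2 + 3 * int m - int s ^ 2 + int s) div 2
                - int m * int n - int m * int h - int h ^ 2 + int h)
      / ((-1) powi (int m - int s - 1) * qpoch q q (m - s) * qpoch q q (m + s)
         * qpoch q q (n - s) * qpoch q q (n + s) * qpoch q q (n - m - h))"
proof -
  interpret sum_setting q n h m s
    using assms by unfold_locales auto
  have "(\<Sum>j=s..m. \<Sum>k=s..n.
      qpoch (q powi (- int n)) q j * qpoch (q powi (- int n)) q k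
      * qpoch x q j * qpoch x q k
      * qpoch (q powi (int j - int m - int h + 1)) q (h - 1)
      * qpoch (q powi (int k - int m - int h + 1)) q (h - 1)
      * (1 - q powi (int k - int j)) * q ^ (2 * j + k)
      / (qpoch q q (j - s) * qpoch q q (j + s) * qpoch q q (k - s) * qpoch q q (k + s))) = lhs x"
    unfolding lhs_def by (intro sum.cong refl) (rule summand_eq)
  also note lhs_closed_form[OF assms(6), unfolded rhs_exponent_def]
  finally show ?thesis .
qed

end
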